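(* Let $\beta>0$, $\tilde\lambda\in(0,1]$, $\mathcal{L}\ge0$, $x\ge0$, $z\ge0$, and portfolio weights $w^D,w^E\ge0$ with $w^D+w^E=1$, and set $y=-w^E\mathcal{L}$. For $\Delta>y$ let $p^D(\Delta)=x/(\Delta-y)$. If $$\Big(\tilde \lambda(x+z) - \beta\mathcal{L} w^D \Big)^2 < 4\beta \tilde\lambda \mathcal{L}xw^E,$$ then there is no $\Delta>y$ satisfying $\beta(\mathcal{L}+\Delta)\le\tilde\lambda\big(z+\Delta p^D(\Delta)\big)$.
   Context: Single period $t$ of a stablecoin market model. The stablecoin holder holds all $\mathcal{L}=\mathcal{L}_{t-1}$ outstanding stablecoins and Ether $\bar n_{t-1}$, and chooses weights $w^D$ (stablecoin) and $w^E=1-w^D$ (Ether); $x=w^D\bar n_{t-1}p^E_t$ is the new dollar stablecoin demand and $y=w^D\mathcal{L}-\mathcal{L}=-w^E\mathcal{L}$. The speculator, owing $\mathcal{L}$ stablecoins and holding Ether worth $z$ dollars, changes supply by $\Delta$; for $\Delta>y$ the market clears at price $p^D(\Delta)=x/(\Delta-y)$. Its leverage constraint (with liquidation threshold $\beta$ and leverage bound $\tilde\lambda$; $\tilde\lambda=1$ is the protocol's liquidation constraint) is $\beta(\mathcal{L}+\Delta)\le\tilde\lambda(z+\Delta p^D(\Delta))$. *)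

theory Defs
  imports Complex_Main
begin

definition pD :: "real \<Rightarrow> real \<Rightarrow> real \<Rightarrow> real" where
  "pD x y \<Delta> = x / (\<Delta> - y)"

end

theory Submission
  imports Defs
begin

text \<open>Writing \<open>u = \<Delta> - y > 0\<close> and clearing the denominator, the leverage constraint becomes
  the quadratic inequality
  \<open>\<beta> u\<^sup>2 + (\<beta> L w\<^sup>D - \<lambda>(x + z)) u + \<lambda> L x w\<^sup>E \<le> 0\<close>; its discriminant is negative by
  hypothesis, so the quadratic is positive everywhere.\<close>

lemma quadratic_pos_of_discriminant_neg:
  fixes a b c u :: real
  assumes "a > 0" and "b\<^sup>2 < 4 * a * c"
  shows "a * u\<^sup>2 + b * u + c > 0"
proof -
  have "4 * a * (a * u\<^sup>2 + b * u + c) = (2 * a * u + b)\<^sup>2 + (4 * a * c - b\<^sup>2)"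
    by (simp add: algebra_simps power2_eq_square)
  also have "\<dots> > 0"
    using assms(2) by (smt (verit) zero_le_power2)
  finally show ?thesis
    using assms(1) by (simp add: zero_less_mult_iff)
qed

lemma leverage_constraint_as_quadratic:
  fixes \<beta> lam L x z wD wE y \<Delta> :: real
  assumes "wD + wE = 1" and "y = - wE * L" and "\<Delta> > y"
    and "\<beta> * (L + \<Delta>) \<le> lam * (z + \<Delta> * pD x y \<Delta>)"
  shows "\<beta> * (\<Delta> - y)\<^sup>2 + (\<beta> * L * wD - lam * (x + z)) * (\<Delta> - y) + lam * L * x * wE \<le> 0"
proof -
  define u where "u = \<Delta> - y"
  have u_pos: "u > 0" and \<Delta>_eq: "\<Delta> = u - wE * L" and wD_eq: "wD = 1 - wE"
    using assms(1-3) by (simp_all add: u_def)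
  have "\<beta> * (L + \<Delta>) * u \<le> lam * (z + \<Delta> * (x / u)) * u"
    using assms(4) u_pos by (simp add: pD_def u_def mult_right_mono)
  also have "\<dots> = lam * z * u + lam * \<Delta> * x"
    using u_pos by (simp add: field_simps)
  finally show ?thesis
    unfolding u_def[symmetric]
    by (simp add: \<Delta>_eq wD_eq algebra_simps power2_eq_square)
qed

theorem proposition3p3:
  fixes \<beta> lam L x z wD wE y :: real
  assumes "\<beta> > 0" and "0 < lam" and "lam \<le> 1"
    and "L \<ge> 0" and "x \<ge> 0" and "z \<ge> 0"
    and "wD \<ge> 0" and "wE \<ge> 0" and "wD + wE = 1"
    and "y = - wE * L"
    and "(lam * (x + z) - \<beta> * L * wD)^2 < 4 * \<beta> * lam * L * x * wE"
  shows "\<not> (\<exists>\<Delta>. \<Delta> > y \<and> \<beta> * (L + \<Delta>) \<le> lam * (z + \<Delta> * pD x y \<Delta>))"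
proof
  assume "\<exists>\<Delta>. \<Delta> > y \<and> \<beta> * (L + \<Delta>) \<le> lam * (z + \<Delta> * pD x y \<Delta>)"
  then obtain \<Delta> where "\<Delta> > y" and "\<beta> * (L + \<Delta>) \<le> lam * (z + \<Delta> * pD x y \<Delta>)"
    by blast
  then have "\<beta> * (\<Delta> - y)\<^sup>2 + (\<beta> * L * wD - lam * (x + z)) * (\<Delta> - y) + lam * L * x * wE \<le> 0"
    using assms(9,10) by (rule leverage_constraint_as_quadratic[rotated 2])
  moreover have "(\<beta> * L * wD - lam * (x + z))\<^sup>2 < 4 * \<beta> * (lam * L * x * wE)"
    using assms(11) by (simp add: power2_commute mult.assoc)
  then have "\<beta> * (\<Delta> - y)\<^sup>2 + (\<beta> * L * wD - lam * (x + z)) * (\<Delta> - y) + lam * L * x * wE > 0"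
    using assms(1) by (rule quadratic_pos_of_discriminant_neg[rotated])
  ultimately show False
    by simp
qed

end
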